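(* Consider the optimization problem (P) defined in the context. Every optimal solution $(\boldsymbol\tau,\boldsymbol\varphi,\mathbf e)$ of (P) satisfies $\sum_{k=0}^{K}\tau_k=T$.
   Context: Parameters: integer $K\ge1$, $T>0$, $W>0$, $\zeta\in(0,1]$, $P_t>0$, $I_p>0$, and for $k=1,\dots,K$: $h_k>0$, $f_k>0$, $\gamma_k>0$, $B_k^b>0$. Variables: $\boldsymbol\tau=(\tau_0,\tau_1,\dots,\tau_K)$, $\boldsymbol\varphi=(\varphi_1,\dots,\varphi_K)$, $\mathbf e=(e_1,\dots,e_K)$. Rate of node $k$: $R_k(\tau_k,\varphi_k,e_k)=\varphi_k W\log_2(1+\frac{e_k}{\varphi_k}\gamma_k)+(\tau_k-\varphi_k)B_k^b$ if $\varphi_k>0$, and $R_k=\tau_kB_k^b$ if $\varphi_k=0$. Problem (P): maximize $R(\boldsymbol\tau,\boldsymbol\varphi,\mathbf e)=\min_{1\le k\le K}R_k(\tau_k,\varphi_k,e_k)$ subject to: $\sum_{k=0}^K\tau_k\le T$; $0\le\tau_0$; $0\le\varphi_k\le\tau_k\le T$ for $k=1,\dots,K$; $0\le e_k\le \zeta P_t h_k\sum_{i=0}^{k-1}\tau_i$ for $k=1,\dots,K$ (harvested-energy constraint); $e_k\le \frac{I_p}{f_k}\varphi_k$ for $k=1,\dots,K$ (interference constraint). *)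

theory Defs
  imports Complex_Main
begin

definition rate :: "real \<Rightarrow> real \<Rightarrow> real \<Rightarrow> real \<Rightarrow> real \<Rightarrow> real \<Rightarrow> real" where
  "rate W \<gamma>k Bk \<tau>k \<phi>k ek =
     (if \<phi>k > 0 then \<phi>k * W * log 2 (1 + ek / \<phi>k * \<gamma>k) + (\<tau>k - \<phi>k) * Bk
      else \<tau>k * Bk)"

definition objective :: "nat \<Rightarrow> real \<Rightarrow> (nat \<Rightarrow> real) \<Rightarrow> (nat \<Rightarrow> real) \<Rightarrow>
    (nat \<Rightarrow> real) \<Rightarrow> (nat \<Rightarrow> real) \<Rightarrow> (nat \<Rightarrow> real) \<Rightarrow> real" where
  "objective K W \<gamma> B \<tau> \<phi> e = Min ((\<lambda>k. rate W (\<gamma> k) (B k) (\<tau> k) (\<phi> k) (e k)) ` {1..K})"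

text \<open>Feasible set of (P). tau is indexed 0..K, phi and e are indexed 1..K.\<close>
definition feasible :: "nat \<Rightarrow> real \<Rightarrow> real \<Rightarrow> real \<Rightarrow> real \<Rightarrow>
    (nat \<Rightarrow> real) \<Rightarrow> (nat \<Rightarrow> real) \<Rightarrow>
    (nat \<Rightarrow> real) \<Rightarrow> (nat \<Rightarrow> real) \<Rightarrow> (nat \<Rightarrow> real) \<Rightarrow> bool" where
  "feasible K T \<zeta> Pt Ip h f \<tau> \<phi> e \<longleftrightarrow>
     (\<Sum>k=0..K. \<tau> k) \<le> T \<and> 0 \<le> \<tau> 0 \<and>
     (\<forall>k\<in>{1..K}. 0 \<le> \<phi> k \<and> \<phi> k \<le> \<tau> k \<and> \<tau> k \<le> T \<and>
        0 \<le> e k \<and> e k \<le> \<zeta> * Pt * h k * (\<Sum>i=0..k-1. \<tau> i) \<and>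
        e k \<le> Ip / f k * \<phi> k)"

definition optimal :: "nat \<Rightarrow> real \<Rightarrow> real \<Rightarrow> real \<Rightarrow> real \<Rightarrow> real \<Rightarrow>
    (nat \<Rightarrow> real) \<Rightarrow> (nat \<Rightarrow> real) \<Rightarrow> (nat \<Rightarrow> real) \<Rightarrow> (nat \<Rightarrow> real) \<Rightarrow>
    (nat \<Rightarrow> real) \<Rightarrow> (nat \<Rightarrow> real) \<Rightarrow> (nat \<Rightarrow> real) \<Rightarrow> bool" where
  "optimal K T W \<zeta> Pt Ip h f \<gamma> B \<tau> \<phi> e \<longleftrightarrow>
     feasible K T \<zeta> Pt Ip h f \<tau> \<phi> e \<and>
     (\<forall>\<tau>' \<phi>' e'. feasible K T \<zeta> Pt Ip h f \<tau>' \<phi>' e' \<longrightarrow>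
        objective K W \<gamma> B \<tau>' \<phi>' e' \<le> objective K W \<gamma> B \<tau> \<phi> e)"

end

theory Submission
  imports Defs
begin

text \<open>If the time slots do not use up the whole frame, lengthening every slot
  \<open>\<tau>\<^sub>0, \<dots>, \<tau>\<^sub>K\<close> by the same \<open>d > 0\<close> keeps the solution feasible (the harvested
  energy only grows) and raises every rate by \<open>d B\<^sub>k > 0\<close>, since the extra time is
  spent in backscatter mode. So the minimum rate strictly increases, and an
  optimal solution must use the whole frame.\<close>

lemma rate_shift:
  "rate W \<gamma>k Bk (\<tau>k + d) \<phi>k ek = rate W \<gamma>k Bk \<tau>k \<phi>k ek + d * Bk"
  unfolding rate_def by (simp add: algebra_simps)

lemma feasible_tau_nonneg:
  assumes "feasible K T \<zeta> Pt Ip h f \<tau> \<phi> e" and "k \<le> K"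
  shows "0 \<le> \<tau> k"
proof (cases "k = 0")
  case True
  then show ?thesis using assms(1) unfolding feasible_def by simp
next
  case False
  with assms(2) have "k \<in> {1..K}" by simp
  with assms(1) show ?thesis unfolding feasible_def by force
qed

lemma feasible_shift:
  assumes feas: "feasible K T \<zeta> Pt Ip h f \<tau> \<phi> e"
    and "0 \<le> d" and room: "(\<Sum>k=0..K. \<tau> k) + (real K + 1) * d \<le> T"
    and gain_nonneg: "\<forall>k\<in>{1..K}. 0 \<le> \<zeta> * Pt * h k"
  shows "feasible K T \<zeta> Pt Ip h f (\<lambda>k. \<tau> k + d) \<phi> e"
  unfolding feasible_def
proof (intro conjI ballI)
  show "(\<Sum>k=0..K. \<tau> k + d) \<le> T"
    using room by (simp add: sum.distrib algebra_simps)
  show "0 \<le> \<tau> 0 + d"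
    using feasible_tau_nonneg[OF feas] \<open>0 \<le> d\<close> by simp
next
  fix k assume k: "k \<in> {1..K}"
  show "0 \<le> \<phi> k" "\<phi> k \<le> \<tau> k + d" "0 \<le> e k" "e k \<le> Ip / f k * \<phi> k"
    using feas k \<open>0 \<le> d\<close> unfolding feasible_def by fastforce+
  have "\<tau> k \<le> (\<Sum>i=0..K. \<tau> i)"
    using k feasible_tau_nonneg[OF feas] by (intro member_le_sum) auto
  moreover have "d \<le> (real K + 1) * d"
    using \<open>0 \<le> d\<close> by (simp add: distrib_right)
  ultimately show "\<tau> k + d \<le> T"
    using room by linarith
  have "e k \<le> \<zeta> * Pt * h k * (\<Sum>i=0..k-1. \<tau> i)"
    using feas k unfolding feasible_def by blast
  also have "\<dots> \<le> \<zeta> * Pt * h k * (\<Sum>i=0..k-1. \<tau> i + d)"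
    using gain_nonneg k \<open>0 \<le> d\<close> by (intro mult_left_mono sum_mono) auto
  finally show "e k \<le> \<zeta> * Pt * h k * (\<Sum>i=0..k-1. \<tau> i + d)" .
qed

lemma objective_shift_less:
  assumes "K \<ge> 1" and "d > 0" and "\<forall>k\<in>{1..K}. B k > 0"
  shows "objective K W \<gamma> B \<tau> \<phi> e < objective K W \<gamma> B (\<lambda>k. \<tau> k + d) \<phi> e"
proof -
  let ?r = "\<lambda>k. rate W (\<gamma> k) (B k) (\<tau> k) (\<phi> k) (e k)"
  let ?r' = "\<lambda>k. rate W (\<gamma> k) (B k) (\<tau> k + d) (\<phi> k) (e k)"
  obtain k where k: "k \<in> {1..K}" and k_min: "Min (?r' ` {1..K}) = ?r' k"
    using Min_in[of "?r' ` {1..K}"] \<open>K \<ge> 1\<close> by fastforce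
  have "Min (?r ` {1..K}) \<le> ?r k" using k by simp
  also have "\<dots> < ?r k + d * B k" using k assms(2,3) by simp
  also have "\<dots> = ?r' k" by (rule rate_shift[symmetric])
  also have "\<dots> = Min (?r' ` {1..K})" by (rule k_min[symmetric])
  finally show ?thesis unfolding objective_def .
qed

theorem proposition1:
  fixes K :: nat and T W \<zeta> Pt Ip :: real
    and h f \<gamma> B \<tau> \<phi> e :: "nat \<Rightarrow> real"
  assumes "K \<ge> 1" and "T > 0" and "W > 0" and "0 < \<zeta>" and "\<zeta> \<le> 1"
    and "Pt > 0" and "Ip > 0"
    and "\<forall>k\<in>{1..K}. h k > 0 \<and> f k > 0 \<and> \<gamma> k > 0 \<and> B k > 0"
    and "optimal K T W \<zeta> Pt Ip h f \<gamma> B \<tau> \<phi> e"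
  shows "(\<Sum>k=0..K. \<tau> k) = T"
proof (rule ccontr)
  assume "(\<Sum>k=0..K. \<tau> k) \<noteq> T"
  have feas: "feasible K T \<zeta> Pt Ip h f \<tau> \<phi> e"
    using assms(9) unfolding optimal_def by blast
  define S where "S = (\<Sum>k=0..K. \<tau> k)"
  have "S < T"
    using feas \<open>(\<Sum>k=0..K. \<tau> k) \<noteq> T\<close> unfolding feasible_def S_def by auto
  define d where "d = (T - S) / (real K + 1)"
  have "d > 0" and room: "S + (real K + 1) * d \<le> T"
    using \<open>S < T\<close> by (simp_all add: d_def)
  have "feasible K T \<zeta> Pt Ip h f (\<lambda>k. \<tau> k + d) \<phi> e"
    using feas \<open>d > 0\<close> room assms(4,6,8) unfolding S_def
    by (intro feasible_shift) auto
  then have "objective K W \<gamma> B (\<lambda>k. \<tau> k + d) \<phi> e \<le> objective K W \<gamma> B \<tau> \<phi> e"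
    using assms(9) unfolding optimal_def by blast
  moreover have "objective K W \<gamma> B \<tau> \<phi> e < objective K W \<gamma> B (\<lambda>k. \<tau> k + d) \<phi> e"
    using assms(1,8) \<open>d > 0\<close> by (intro objective_shift_less) auto
  ultimately show False by linarith
qed

end
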